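(* Let $\alpha_{\mathsf{snr},n_t}:=\int_0^{\sqrt{\mathsf{snr}}}\zeta_0(r)^{\frac{n_t-1}{2}}\zeta_2(r)^{\frac12}n_t r^{n_t-1}dr$. Then: (i) In the regime $n_t\,\mathsf{snr}\to0$, $\alpha_{\mathsf{snr},n_t}\sim\left(\frac2\pi\mathsf{snr}\right)^{n_t/2}$. (ii) In the regime $\mathsf{snr}/n_t\to\infty$, $$\alpha_{\mathsf{snr},n_t}\sim\begin{cases}\int_0^\infty\sqrt{\zeta_2(r)}\,dr,& n_t=1,\\ A_0^{\frac{n_t-1}{2}}A_2^{\frac12}\ln\mathsf{snr},& n_t=2,\\ \frac{2n_t}{n_t-2}A_0^{\frac{n_t-1}{2}}A_2^{\frac12}\,\mathsf{snr}^{\frac{n_t-2}{4}},& n_t\ge3.\end{cases}$$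
   Context: $\phi(t)=\frac{1}{\sqrt{2\pi}}e^{-t^2/2}$, $Q(x)=\int_x^\infty\phi(t)dt$, $\xi(s):=\frac{\phi^2(s)}{Q(s)(1-Q(s))}$, $\zeta_k(t):=\mathbb{E}[S^k\xi(tS)]$ for $S\sim\mathcal{N}(0,1)$, $k\in\mathbb{Z}$. $A_0:=\frac{1}{\sqrt{2\pi}}\int_{-\infty}^{\infty}\xi(u)du$ and $A_2:=\frac{1}{\sqrt{2\pi}}\int_{-\infty}^{\infty}\xi(u)u^2du$. $a\sim b$ means $a/b\to1$ in the indicated limit. *)

theory Defs
  imports "HOL-Analysis.Analysis"
begin

definition phi :: "real \<Rightarrow> real" where
  "phi t = exp (- (t^2) / 2) / sqrt (2 * pi)"

definition Qf :: "real \<Rightarrow> real" where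
  "Qf x = (LBINT t:{x..}. phi t)"

definition xi :: "real \<Rightarrow> real" where
  "xi s = (phi s)^2 / (Qf s * (1 - Qf s))"

definition zeta :: "int \<Rightarrow> real \<Rightarrow> real" where
  "zeta k t = (\<integral>s. (s powi k) * xi (t * s) * phi s \<partial>lborel)"

definition A0 :: real where
  "A0 = (1 / sqrt (2 * pi)) * (\<integral>u. xi u \<partial>lborel)"

definition A2 :: real where
  "A2 = (1 / sqrt (2 * pi)) * (\<integral>u. xi u * u^2 \<partial>lborel)"

definition alpha :: "real \<Rightarrow> nat \<Rightarrow> real" where
  "alpha snr nt = (LBINT r=0..sqrt snr.
      zeta 0 r powr ((real nt - 1) / 2) * sqrt (zeta 2 r) * real nt * r ^ (nt - 1))"

end

theory Submission
  imports Defs "HOL-Probability.Distributions"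
begin

(* Near the origin: Q is phi(0)-Lipschitz with Q(0) = 1/2, so xi(x) = 2/pi + O(x^2), hence
   zeta_0(r) and zeta_2(r) are 2/pi + O(r^2), and Bernoulli's inequality turns the integral defining
   alpha into (2/pi snr)^(n/2) (1 + O(n snr)), uniformly in n.
   Far from it: the substitution u = r s turns r^(k+1) zeta_k(r) into the integral of xi(u) u^k phi(u/r),
   which lies between A_k - O(1/r^2) and A_k because 0 <= phi(0) - phi(u/r) <= phi(0) u^2/(2 r^2) and
   xi has Gaussian tails. So the integrand of alpha is n A0^((n-1)/2) A2^(1/2) r^((n-4)/2) (1 - O(1/r^2))^(n/2):
   integrable at infinity for n = 1, giving A0^(1/2) A2^(1/2) ln snr + O(1) for n = 2, and for n >= 3
   integrating to the power law, all of whose mass but a fraction theta^((n-2)/2) lies in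
   [theta sqrt snr, sqrt snr], where the relative error is O(n/(theta^2 snr)). *)

lemma borel_measurable_lborel_integral_param:
  fixes f :: "real \<Rightarrow> real \<Rightarrow> real"
  assumes "(\<lambda>(x, y). f x y) \<in> borel_measurable (borel \<Otimes>\<^sub>M borel)"
  shows "(\<lambda>x. \<integral>y. f x y \<partial>lborel) \<in> borel_measurable borel"
proof -
  have "(\<lambda>(x, y). f x y) \<in> borel_measurable (borel \<Otimes>\<^sub>M lborel)"
    using assms by (simp add: measurable_cong_sets[OF sets_pair_measure_cong[OF refl sets_lborel] refl])
  from lborel.borel_measurable_lebesgue_integral[OF this] show ?thesis by simp
qed

lemma integral_pos_AE:
  fixes f :: "'a::euclidean_space \<Rightarrow> real"
  assumes "integrable lborel f" "AE x in lborel. 0 < f x"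
  shows "0 < (\<integral>x. f x \<partial>lborel)"
proof -
  have nonneg: "AE x in lborel. 0 \<le> f x" using assms(2) by eventually_elim simp
  have "(\<integral>x. f x \<partial>lborel) \<noteq> 0"
  proof
    assume "(\<integral>x. f x \<partial>lborel) = 0"
    then have "AE x in lborel. f x = 0" using integral_nonneg_eq_0_iff_AE[OF assms(1) nonneg] by simp
    with assms(2) have "AE x in lborel. f x \<noteq> f x" by eventually_elim simp
    then show False by (simp add: eventually_False ae_filter_eq_bot_iff)
  qed
  with integral_nonneg_AE[OF nonneg] show ?thesis by linarith
qed

lemma set_integral_mono_subset:
  fixes f :: "'a \<Rightarrow> real"
  assumes "set_integrable M A f" "B \<in> sets M" "B \<subseteq> A" "\<And>x. x \<in> A \<Longrightarrow> 0 \<le> f x"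
  shows "(LINT x:B|M. f x) \<le> (LINT x:A|M. f x)"
  using assms set_integrable_subset[OF assms(1-3)] unfolding set_lebesgue_integral_def set_integrable_def
  by (intro integral_mono) (auto simp: indicator_def)

lemma set_integral_FTC_Icc:
  fixes f F :: "real \<Rightarrow> real"
  assumes "a \<le> b" "continuous_on {a..b} f" "\<And>x. x \<in> {a..b} \<Longrightarrow> (F has_real_derivative f x) (at x)"
  shows "set_integrable lborel {a..b} f" "(LBINT x:{a..b}. f x) = F b - F a"
proof -
  show "set_integrable lborel {a..b} f"
    using assms(2) by (rule borel_integrable_atLeastAtMost')
  show "(LBINT x:{a..b}. f x) = F b - F a"
    unfolding set_lebesgue_integral_def
    using assms by (intro integral_FTC_atLeastAtMost)
      (auto simp: has_real_derivative_iff_has_vector_derivative[symmetric] intro: has_field_derivative_at_within)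
qed

lemma set_integral_nonneg_has_integral:
  fixes f :: "real \<Rightarrow> real"
  assumes "(f has_integral I) S" "\<And>x. x \<in> S \<Longrightarrow> 0 \<le> f x"
    and [measurable]: "S \<in> sets borel" "f \<in> borel_measurable borel"
  shows "set_integrable lborel S f" "(LBINT x:S. f x) = I"
proof -
  have "f absolutely_integrable_on S"
    using assms(1,2) by (intro nonnegative_absolutely_integrable_1) (auto simp: has_integral_integrable)
  then show int: "set_integrable lborel S f"
    unfolding set_integrable_def by (subst (asm) integrable_completion) measurable
  show "(LBINT x:S. f x) = I"
    using set_borel_integral_eq_integral(2)[OF int] assms(1) by (simp add: integral_unique)
qed

lemma set_integral_powr_from_0:
  fixes p b :: real
  assumes "-1 < p" "0 \<le> b"
  shows "set_integrable lborel {0..b} (\<lambda>x. x powr p)" "(LBINT x:{0..b}. x powr p) = b powr (p + 1) / (p + 1)"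
  using set_integral_nonneg_has_integral[OF has_integral_powr_from_0[OF assms]] by auto

lemma set_integrable_powr_to_inf:
  fixes p a :: real
  assumes "p < -1" "0 < a"
  shows "set_integrable lborel {a..} (\<lambda>x. x powr p)"
  using set_integral_nonneg_has_integral(1)[OF has_integral_powr_to_inf[OF assms]] by auto

lemma set_integral_Icc_power:
  fixes T :: real
  assumes "0 \<le> T" "1 \<le> n"
  shows "set_integrable lborel {0..T} (\<lambda>r. real n * r^(n - 1))" "(LBINT r:{0..T}. real n * r^(n - 1)) = T^n"
proof -
  have "0 \<le> T" "continuous_on {0..T} (\<lambda>r. real n * r^(n - 1))"
    "\<And>r. ((\<lambda>r. r^n) has_real_derivative real n * r^(n - 1)) (at r)"
    using assms(1) by (auto intro!: continuous_intros derivative_eq_intros)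
  from set_integral_FTC_Icc[OF this] show
    "set_integrable lborel {0..T} (\<lambda>r. real n * r^(n - 1))" "(LBINT r:{0..T}. real n * r^(n - 1)) = T^n"
    using assms(2) by simp_all
qed

lemma set_integral_powr_Icc:
  fixes a b q :: real
  assumes "0 < a" "a \<le> b" "q \<noteq> 0"
  shows "set_integrable lborel {a..b} (\<lambda>r. r powr (q - 1))"
    "(LBINT r:{a..b}. r powr (q - 1)) = (b powr q - a powr q) / q"
proof -
  have "a \<le> b" "continuous_on {a..b} (\<lambda>r. r powr (q - 1))"
    "\<And>r. r \<in> {a..b} \<Longrightarrow> ((\<lambda>r. r powr q / q) has_real_derivative r powr (q - 1)) (at r)"
    using assms by (auto intro!: continuous_intros derivative_eq_intros)
  from set_integral_FTC_Icc[OF this] show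
    "set_integrable lborel {a..b} (\<lambda>r. r powr (q - 1))"
    "(LBINT r:{a..b}. r powr (q - 1)) = (b powr q - a powr q) / q"
    by (simp_all add: diff_divide_distrib)
qed

lemma set_integral_inverse_minus_cube:
  fixes c T :: real
  assumes "1 \<le> T"
  shows "set_integrable lborel {1..T} (\<lambda>r. 1 / r - c / r^3)"
    "(LBINT r:{1..T}. 1 / r - c / r^3) = ln T + c / (2 * T^2) - c / 2"
proof -
  have "1 \<le> T" "continuous_on {1..T} (\<lambda>r. 1 / r - c / r^3)"
    "\<And>r. r \<in> {1..T} \<Longrightarrow> ((\<lambda>r. ln r + c / (2 * r^2)) has_real_derivative 1 / r - c / r^3) (at r)"
    using assms by (auto intro!: continuous_intros derivative_eq_intros simp: power3_eq_cube power2_eq_square field_simps)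
  from set_integral_FTC_Icc[OF this] show
    "set_integrable lborel {1..T} (\<lambda>r. 1 / r - c / r^3)"
    "(LBINT r:{1..T}. 1 / r - c / r^3) = ln T + c / (2 * T^2) - c / 2"
    by simp_all
qed

lemma sqrt_powr: "0 \<le> x \<Longrightarrow> sqrt x powr p = x powr (p / 2)"
  by (simp add: powr_half_sqrt[symmetric] powr_powr)

lemma powr_mult_sqrt: "0 \<le> a \<Longrightarrow> a powr p * sqrt a = a powr (p + 1 / 2)"
  for a p :: real
  by (cases "a = 0") (simp_all add: powr_add powr_half_sqrt)

lemma one_minus_powr_half_ge:
  fixes y :: real
  assumes "0 \<le> y" "y \<le> 1" "1 \<le> n"
  shows "1 - real n * y \<le> (1 - y) powr (real n / 2)"
proof (cases "y = 1")
  case False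
  then have "1 + real n * (- y) \<le> (1 + (- y))^n"
    using assms by (intro Bernoulli_inequality) auto
  also have "\<dots> = (1 - y) powr real n"
    using assms False by (simp add: powr_realpow)
  also have "\<dots> \<le> (1 - y) powr (real n / 2)"
    using assms by (intro powr_mono') auto
  finally show ?thesis by simp
qed (use assms in simp)

lemma one_plus_powr_half_le:
  fixes y :: real
  assumes "0 \<le> y" "real n * y \<le> 1"
  shows "(1 + y) powr (real n / 2) \<le> 1 + 2 * real n * y"
proof -
  have "(1 + y) powr (real n / 2) \<le> (1 + y) powr real n"
    using assms by (intro powr_mono) auto
  also have "\<dots> = (1 + y)^n"
    using assms by (simp add: powr_realpow)
  also have "\<dots> \<le> exp y ^ n"
    using assms exp_ge_add_one_self[of y] by (intro power_mono) auto
  also have "\<dots> = exp (real n * y)"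
    by (simp add: exp_of_nat_mult)
  also have "\<dots> \<le> 1 + real n * y + (real n * y)^2"
    using assms by (intro exp_bound) auto
  also have "\<dots> \<le> 1 + 2 * real n * y"
  proof -
    have "(real n * y)^2 \<le> real n * y"
      using assms by (simp add: power2_eq_square mult_left_le)
    then show ?thesis by linarith
  qed
  finally show ?thesis .
qed

section \<open>The Gaussian density and its tail function\<close>

lemma phi_eq_std_normal_density: "phi = std_normal_density"
  by (simp add: fun_eq_iff phi_def std_normal_density_def)

lemma phi_pos: "0 < phi x"
  by (simp add: phi_def)

lemma phi_minus: "phi (- x) = phi x"
  by (simp add: phi_def)

lemma phi_eq_phi0_exp: "phi x = phi 0 * exp (- (x^2) / 2)"
  by (simp add: phi_def)

lemma phi_le_phi0: "phi x \<le> phi 0"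
  using phi_pos[of 0] by (simp add: phi_eq_phi0_exp[of x])

lemma phi0_minus_phi_bounds: "0 \<le> phi 0 - phi x" "phi 0 - phi x \<le> phi 0 * x^2 / 2"
proof -
  show "0 \<le> phi 0 - phi x" using phi_le_phi0 by simp
  have "1 - exp (- (x^2) / 2) \<le> x^2 / 2"
    using exp_ge_add_one_self[of "- (x^2) / 2"] by simp
  then have "phi 0 * (1 - exp (- (x^2) / 2)) \<le> phi 0 * (x^2 / 2)"
    using phi_pos[of 0] by (intro mult_left_mono) auto
  then show "phi 0 - phi x \<le> phi 0 * x^2 / 2"
    by (simp add: phi_eq_phi0_exp[of x] right_diff_distrib)
qed

lemma phi_squared: "phi x ^ 2 = exp (- (x^2)) / (2 * pi)"
  by (simp add: phi_def power_divide power_mult_distrib flip: exp_of_nat_mult)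

lemma phi0_squared: "phi 0 ^ 2 = 1 / (2 * pi)"
  by (simp add: phi_squared)

lemma borel_measurable_phi [measurable]: "phi \<in> borel_measurable borel"
  unfolding phi_def by measurable

lemma integrable_phi_moment: "integrable lborel (\<lambda>s. s^k * phi s)"
  using integrable_std_normal_moment[of k] by (simp add: phi_eq_std_normal_density mult.commute)

lemma integrable_phi_abs_moment: "integrable lborel (\<lambda>s. \<bar>s\<bar>^k * phi s)"
  using integrable_std_normal_moment_abs[of k] by (simp add: phi_eq_std_normal_density mult.commute)

lemma integral_phi_moments:
  "(\<integral>s. phi s \<partial>lborel) = 1" "(\<integral>s. s^2 * phi s \<partial>lborel) = 1" "(\<integral>s. s^4 * phi s \<partial>lborel) = 3"
  using integral_std_normal_moment_even[of 1] integral_std_normal_moment_even[of 2]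
  by (simp_all add: phi_eq_std_normal_density mult.commute fact_numeral)

lemma integrable_indicator_phi: "A \<in> sets borel \<Longrightarrow> integrable lborel (\<lambda>t. indicator A t * phi t)"
  using integrable_real_mult_indicator[of A lborel phi] integrable_phi_moment[of 0]
  by (simp add: mult.commute)

lemma Qf_eq_integral: "Qf x = (\<integral>t. indicator {x..} t * phi t \<partial>lborel)"
  by (simp add: Qf_def set_lebesgue_integral_def)

lemma borel_measurable_Qf [measurable]: "Qf \<in> borel_measurable borel"
proof -
  have "Qf = (\<lambda>x. \<integral>t. of_bool (x \<le> t) * phi t \<partial>lborel)"
    by (simp add: fun_eq_iff Qf_eq_integral indicator_def)
  also have "\<dots> \<in> borel_measurable borel"
    by (rule borel_measurable_lborel_integral_param) measurable
  finally show ?thesis .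
qed

lemma Qf_diff: "x \<le> y \<Longrightarrow> Qf x - Qf y = (\<integral>t. indicator {x..<y} t * phi t \<partial>lborel)"
proof -
  assume "x \<le> y"
  then have "indicator {x..} t * phi t = indicator {x..<y} t * phi t + indicator {y..} t * phi t" for t :: real
    by (auto simp: indicator_def)
  then show ?thesis
    by (simp add: Qf_eq_integral integrable_indicator_phi)
qed

lemma Qf_minus: "Qf (- x) = 1 - Qf x"
proof -
  have "Qf (- x) = (\<integral>t. indicator {- x..} (- t) * phi (- t) \<partial>lborel)"
    using lborel_integral_real_affine[of "-1" "\<lambda>t. indicator {- x..} t * phi t" 0]
    by (simp add: Qf_eq_integral)
  also have "\<dots> = (\<integral>t. phi t - indicator {x..} t * phi t \<partial>lborel)"
    using AE_lborel_singleton[of x]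
    by (intro integral_cong_AE) (auto elim!: eventually_mono simp: indicator_def phi_minus)
  also have "\<dots> = 1 - Qf x"
    using integrable_phi_moment[of 0] integral_phi_moments(1)
    by (simp add: Qf_eq_integral integrable_indicator_phi)
  finally show ?thesis .
qed

lemma Qf_0: "Qf 0 = 1 / 2"
  using Qf_minus[of 0] by simp

lemma Qf_antimono_lipschitz:
  assumes "x \<le> y"
  shows "0 \<le> Qf x - Qf y" "Qf x - Qf y \<le> phi 0 * (y - x)"
proof -
  have "0 \<le> (\<integral>t. indicator {x..<y} t * phi t \<partial>lborel)"
    by (intro integral_nonneg_AE) (simp add: less_imp_le[OF phi_pos])
  then show "0 \<le> Qf x - Qf y" using Qf_diff[OF assms] by simp
  have "(\<integral>t. indicator {x..<y} t * phi t \<partial>lborel) \<le> (\<integral>t. phi 0 * indicator {x..<y} t \<partial>lborel)"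
    by (intro integral_mono integrable_indicator_phi integrable_mult_right integrable_real_indicator)
       (auto simp: assms emeasure_lborel_Ico indicator_def phi_le_phi0)
  then show "Qf x - Qf y \<le> phi 0 * (y - x)" using Qf_diff[OF assms] assms by simp
qed

lemma Qf_nonneg: "0 \<le> Qf x"
  unfolding Qf_eq_integral by (intro integral_nonneg_AE) (simp add: less_imp_le[OF phi_pos])

lemma Qf_ge_phi: "0 \<le> x \<Longrightarrow> phi (x + 1) \<le> Qf x"
proof -
  assume "0 \<le> x"
  then have "t^2 \<le> (x + 1)^2" if "t \<in> {x..<x + 1}" for t
    using that by (intro power_mono) auto
  then have "phi (x + 1) * indicator {x..<x + 1} t \<le> indicator {x..<x + 1} t * phi t" for t
    using phi_pos[of 0] by (auto simp: indicator_def phi_eq_phi0_exp[of t] phi_eq_phi0_exp[of "x + 1"])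
  then have "phi (x + 1) \<le> (\<integral>t. indicator {x..<x + 1} t * phi t \<partial>lborel)"
    using integral_mono[OF _ integrable_indicator_phi, of "\<lambda>t. phi (x + 1) * indicator {x..<x + 1} t"]
    by simp
  also have "\<dots> = Qf x - Qf (x + 1)" using Qf_diff[of x "x + 1"] by simp
  also have "\<dots> \<le> Qf x" using Qf_nonneg[of "x + 1"] by simp
  finally show ?thesis .
qed

lemma Qf_pos: "0 < Qf x"
proof (cases "0 \<le> x")
  case True
  then show ?thesis using Qf_ge_phi[of x] phi_pos[of "x + 1"] by linarith
next
  case False
  then show ?thesis using Qf_antimono_lipschitz(1)[of x 0] Qf_0 by simp
qed

lemma Qf_less_1: "Qf x < 1"
  using Qf_pos[of "- x"] Qf_minus[of x] by simp

lemma Qf_var_bounds: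
  "0 < Qf x * (1 - Qf x)" "Qf x * (1 - Qf x) \<le> 1 / 4" "1 / 4 - phi 0 ^ 2 * x^2 \<le> Qf x * (1 - Qf x)"
proof -
  have var: "Qf x * (1 - Qf x) = 1 / 4 - (Qf x - 1 / 2)^2"
    by (simp add: power2_eq_square algebra_simps)
  have "\<bar>Qf x - 1 / 2\<bar> \<le> phi 0 * \<bar>x\<bar>"
    using Qf_antimono_lipschitz[of 0 x] Qf_antimono_lipschitz[of x 0] Qf_0 by (cases "0 \<le> x") auto
  then have "(Qf x - 1 / 2)^2 \<le> (phi 0 * \<bar>x\<bar>)^2"
    by (metis abs_ge_zero power2_abs power_mono)
  then show "1 / 4 - phi 0 ^ 2 * x^2 \<le> Qf x * (1 - Qf x)"
    unfolding var by (simp add: power_mult_distrib)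
  show "0 < Qf x * (1 - Qf x)" using Qf_pos[of x] Qf_less_1[of x] by simp
  show "Qf x * (1 - Qf x) \<le> 1 / 4" unfolding var by simp
qed

section \<open>The function xi\<close>

lemma xi_pos: "0 < xi x"
  using Qf_var_bounds(1)[of x] phi_pos[of x] by (simp add: xi_def)

lemma xi_minus: "xi (- x) = xi x"
  by (simp add: xi_def phi_minus Qf_minus mult.commute)

lemma borel_measurable_xi [measurable]: "xi \<in> borel_measurable borel"
  unfolding xi_def by measurable

lemma xi_ge: "4 * phi x ^ 2 \<le> xi x"
proof -
  have "phi x ^ 2 / (1 / 4) \<le> phi x ^ 2 / (Qf x * (1 - Qf x))"
    using Qf_var_bounds(1,2)[of x] by (intro divide_left_mono) auto
  then show ?thesis by (simp add: xi_def)
qed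

lemma xi_le_gaussian: "xi x \<le> 2 * phi 0 * exp (3 / 2) * exp (- (x^2) / 4)"
proof -
  have bound: "xi x \<le> 2 * phi 0 * exp (3 / 2) * exp (- (x^2) / 4)" if "0 \<le> x" for x
  proof -
    have "phi (x + 1) / 2 \<le> Qf x * (1 / 2)"
      using Qf_ge_phi[OF that] by simp
    also have "\<dots> \<le> Qf x * (1 - Qf x)"
      using Qf_antimono_lipschitz(1)[OF that] Qf_0 Qf_pos[of x] by (intro mult_left_mono) auto
    finally have "xi x \<le> phi x ^ 2 / (phi (x + 1) / 2)"
      unfolding xi_def using phi_pos[of "x + 1"] by (intro divide_left_mono) auto
    also have "\<dots> = 2 * phi 0 * (exp (- (x^2)) / exp (- ((x + 1)^2) / 2))"
      unfolding phi_squared phi_eq_phi0_exp[of "x + 1"]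
      using phi_pos[of 0] phi0_squared by (simp add: field_simps power2_eq_square)
    also have "\<dots> = 2 * phi 0 * exp ((x + 1)^2 / 2 - x^2)"
      by (subst exp_diff[symmetric]) (simp add: algebra_simps)
    also have "\<dots> \<le> 2 * phi 0 * exp (3 / 2 - x^2 / 4)"
    proof -
      have "(x + 1)^2 / 2 - x^2 \<le> 3 / 2 - x^2 / 4"
        using zero_le_power2[of "x / 2 - 1"] by (simp add: power2_eq_square algebra_simps)
      then show ?thesis using phi_pos[of 0] by simp
    qed
    also have "\<dots> = 2 * phi 0 * exp (3 / 2) * exp (- (x^2) / 4)"
      by (simp add: mult.assoc flip: exp_add)
    finally show ?thesis .
  qed
  show ?thesis
    using bound[of x] bound[of "- x"] by (cases "0 \<le> x") (simp_all add: xi_minus)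
qed

lemma xi_le: "xi x \<le> 2 * phi 0 * exp (3 / 2)"
proof -
  have "2 * phi 0 * exp (3 / 2) * exp (- (x^2) / 4) \<le> 2 * phi 0 * exp (3 / 2) * 1"
    using phi_pos[of 0] by (intro mult_left_mono) auto
  then show ?thesis using xi_le_gaussian[of x] by simp
qed

lemma xi_ge_near_0: "- (2 / pi * x^2) \<le> xi x - 2 / pi"
proof -
  have "2 / pi * (1 - x^2) \<le> 2 / pi * exp (- (x^2))"
    using exp_ge_add_one_self[of "- (x^2)"] by (intro mult_left_mono) auto
  then show ?thesis
    using xi_ge[of x] by (simp add: phi_squared right_diff_distrib)
qed

lemma xi_le_near_0:
  assumes "x^2 \<le> pi / 4"
  shows "xi x - 2 / pi \<le> 8 / pi^2 * x^2"
proof -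
  let ?D = "Qf x * (1 - Qf x)"
  have D: "0 < ?D" "1 / 4 - x^2 / (2 * pi) \<le> ?D"
    using Qf_var_bounds[of x] by (simp_all add: phi0_squared)
  have "xi x - 2 / pi = (phi x ^ 2 - 2 / pi * ?D) / ?D"
    using D(1) by (simp only: xi_def diff_divide_distrib nonzero_mult_div_cancel_right less_irrefl)
  also have "\<dots> \<le> x^2 / pi^2 / ?D"
  proof (intro divide_right_mono)
    have "phi x ^ 2 \<le> 1 / (2 * pi)" by (simp add: phi_squared divide_right_mono)
    moreover have "2 / pi * (1 / 4 - x^2 / (2 * pi)) \<le> 2 / pi * ?D"
      using D(2) by (intro mult_left_mono) auto
    moreover have "2 / pi * (1 / 4 - x^2 / (2 * pi)) = 1 / (2 * pi) - x^2 / pi^2"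
      by (simp add: power2_eq_square field_simps)
    ultimately show "phi x ^ 2 - 2 / pi * ?D \<le> x^2 / pi^2"
      by linarith
  qed (use D in auto)
  also have "\<dots> \<le> x^2 / pi^2 / (1 / 8)"
  proof (intro divide_left_mono)
    have "x^2 / (2 * pi) \<le> 1 / 8" using assms by (simp add: field_simps)
    then show "1 / 8 \<le> ?D" using D(2) by linarith
  qed (use D in auto)
  finally show ?thesis by (simp add: mult.commute)
qed

lemma xi_quadratic_near_0: "\<exists>K. \<forall>x. \<bar>xi x - 2 / pi\<bar> \<le> K * x^2"
proof -
  define C where "C = 2 * phi 0 * exp (3 / 2)"
  have "\<bar>xi x - 2 / pi\<bar> \<le> (2 / pi + 8 / pi^2 + 4 / pi * C) * x^2" for x
  proof -
    have nonneg: "0 \<le> 2 / pi * x^2" "0 \<le> 8 / pi^2 * x^2" "0 \<le> 4 / pi * C * x^2"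
      using phi_pos[of 0] by (simp_all add: C_def)
    have "xi x - 2 / pi \<le> 8 / pi^2 * x^2 + 4 / pi * C * x^2"
    proof (cases "x^2 \<le> pi / 4")
      case True
      then show ?thesis using xi_le_near_0 nonneg by fastforce
    next
      case False
      then have "C \<le> 4 / pi * C * x^2"
        using phi_pos[of 0] by (simp add: C_def field_simps)
      moreover have "xi x - 2 / pi \<le> C"
        using xi_le[of x] divide_pos_pos[OF _ pi_gt_zero, of 2] unfolding C_def by linarith
      ultimately show ?thesis using nonneg by linarith
    qed
    then show ?thesis
      using xi_ge_near_0[of x] nonneg unfolding abs_le_iff ring_distribs by linarith
  qed
  then show ?thesis by blast
qed

lemma integrable_xi_abs_moment: "integrable lborel (\<lambda>x. xi x * \<bar>x\<bar>^k)"
proof (rule Bochner_Integration.integrable_bound)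
  let ?C = "2 * phi 0 * exp (3 / 2) * sqrt (4 * pi)"
  show "integrable lborel (\<lambda>x. ?C * (normal_density 0 (sqrt 2) x * \<bar>x - 0\<bar>^k))"
    by (intro integrable_mult_right integrable_normal_moment_abs) auto
  show "AE x in lborel. norm (xi x * \<bar>x\<bar>^k) \<le> norm (?C * (normal_density 0 (sqrt 2) x * \<bar>x - 0\<bar>^k))"
  proof (intro AE_I2)
    fix x :: real
    have "xi x * \<bar>x\<bar>^k \<le> 2 * phi 0 * exp (3 / 2) * exp (- (x^2) / 4) * \<bar>x\<bar>^k"
      by (intro mult_right_mono xi_le_gaussian) simp
    also have "\<dots> = ?C * (normal_density 0 (sqrt 2) x * \<bar>x - 0\<bar>^k)"
      by (simp add: normal_density_def real_sqrt_mult)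
    finally show "norm (xi x * \<bar>x\<bar>^k) \<le> norm (?C * (normal_density 0 (sqrt 2) x * \<bar>x - 0\<bar>^k))"
      using xi_pos[of x] by simp
  qed
qed measurable

lemma integrable_xi_moment: "integrable lborel (\<lambda>x. xi x * x^k)"
  using integrable_xi_abs_moment[of k]
  by (rule Bochner_Integration.integrable_bound) (auto simp: abs_mult power_abs)

section \<open>The functions zeta k\<close>

lemma zeta_of_nat: "zeta (int k) r = (\<integral>s. s^k * xi (r * s) * phi s \<partial>lborel)"
  by (simp add: zeta_def)

lemma borel_measurable_zeta [measurable]: "zeta k \<in> borel_measurable borel"
  unfolding zeta_def[abs_def] power_int_def
  by (rule borel_measurable_lborel_integral_param) measurable

lemma integrable_zeta_integrand: "integrable lborel (\<lambda>s. s^k * xi (r * s) * phi s)"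
proof (rule Bochner_Integration.integrable_bound)
  let ?C = "2 * phi 0 * exp (3 / 2)"
  show "integrable lborel (\<lambda>s. ?C * (\<bar>s\<bar>^k * phi s))"
    by (intro integrable_mult_right integrable_phi_abs_moment)
  show "AE s in lborel. norm (s^k * xi (r * s) * phi s) \<le> norm (?C * (\<bar>s\<bar>^k * phi s))"
  proof (intro AE_I2)
    fix s :: real
    have "\<bar>s\<bar>^k * xi (r * s) * phi s \<le> \<bar>s\<bar>^k * ?C * phi s"
      using xi_le[of "r * s"] phi_pos[of s] by (intro mult_right_mono mult_left_mono) auto
    then show "norm (s^k * xi (r * s) * phi s) \<le> norm (?C * (\<bar>s\<bar>^k * phi s))"
      using xi_pos[of "r * s"] phi_pos[of s] phi_pos[of 0] by (simp add: abs_mult power_abs mult_ac)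
  qed
qed measurable

lemma zeta_pos: "even k \<Longrightarrow> 0 < zeta (int k) r"
  unfolding zeta_of_nat
  using AE_lborel_singleton[of 0] xi_pos phi_pos
  by (intro integral_pos_AE integrable_zeta_integrand) (auto elim!: eventually_mono simp: zero_less_power_eq)

lemma zeta_0_2_pos: "0 < zeta 0 r" "0 < zeta 2 r"
  using zeta_pos[of 0 r] zeta_pos[of 2 r] by simp_all

lemma zeta_near_0:
  assumes xi_near_0: "\<And>x. \<bar>xi x - 2 / pi\<bar> \<le> K * x^2" and "even k"
  shows "\<bar>zeta (int k) r - 2 / pi * (\<integral>s. s^k * phi s \<partial>lborel)\<bar> \<le> K * r^2 * (\<integral>s. s^(k + 2) * phi s \<partial>lborel)"
proof -
  have diff: "(\<lambda>s. (xi (r * s) - 2 / pi) * (s^k * phi s)) = (\<lambda>s. s^k * xi (r * s) * phi s - 2 / pi * (s^k * phi s))"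
    by (simp add: fun_eq_iff algebra_simps)
  have int_diff: "integrable lborel (\<lambda>s. (xi (r * s) - 2 / pi) * (s^k * phi s))"
    unfolding diff by (intro Bochner_Integration.integrable_diff integrable_zeta_integrand
        integrable_mult_right integrable_phi_moment)
  have "zeta (int k) r - 2 / pi * (\<integral>s. s^k * phi s \<partial>lborel) = (\<integral>s. (xi (r * s) - 2 / pi) * (s^k * phi s) \<partial>lborel)"
    unfolding diff zeta_of_nat
    by (simp add: integrable_zeta_integrand integrable_phi_moment)
  also have "\<bar>\<dots>\<bar> \<le> (\<integral>s. \<bar>(xi (r * s) - 2 / pi) * (s^k * phi s)\<bar> \<partial>lborel)"
    by (rule integral_abs_bound)
  also have "\<dots> \<le> (\<integral>s. K * r^2 * (s^(k + 2) * phi s) \<partial>lborel)"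
  proof (rule integral_mono)
    show "integrable lborel (\<lambda>s. \<bar>(xi (r * s) - 2 / pi) * (s^k * phi s)\<bar>)"
      using int_diff by (rule integrable_abs)
    show "integrable lborel (\<lambda>s. K * r^2 * (s^(k + 2) * phi s))"
      by (intro integrable_mult_right integrable_phi_moment)
    fix s :: real
    have "0 \<le> s^k" using \<open>even k\<close> by (simp add: zero_le_even_power)
    then have "\<bar>(xi (r * s) - 2 / pi) * (s^k * phi s)\<bar> = \<bar>xi (r * s) - 2 / pi\<bar> * (s^k * phi s)"
      using phi_pos[of s] by (simp add: abs_mult)
    also have "\<dots> \<le> K * (r * s)^2 * (s^k * phi s)"
      using xi_near_0[of "r * s"] \<open>0 \<le> s^k\<close> phi_pos[of s] by (intro mult_right_mono) auto
    also have "\<dots> = K * r^2 * (s^(k + 2) * phi s)"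
      by (simp add: power_mult_distrib power_add power2_eq_square mult_ac)
    finally show "\<bar>(xi (r * s) - 2 / pi) * (s^k * phi s)\<bar> \<le> K * r^2 * (s^(k + 2) * phi s)" .
  qed
  finally show ?thesis by simp
qed

lemma zeta_0_2_near_0: "\<exists>K. \<forall>r. \<bar>zeta 0 r - 2 / pi\<bar> \<le> K * r^2 \<and> \<bar>zeta 2 r - 2 / pi\<bar> \<le> K * r^2"
proof -
  obtain K where K: "\<And>x. \<bar>xi x - 2 / pi\<bar> \<le> K * x^2"
    using xi_quadratic_near_0 by blast
  have "0 \<le> K" using K[of 1] by simp
  have "\<bar>zeta 0 r - 2 / pi\<bar> \<le> 3 * K * r^2" "\<bar>zeta 2 r - 2 / pi\<bar> \<le> 3 * K * r^2" for r
    using zeta_near_0[OF K, of 0 r, unfolded add_0] zeta_near_0[OF K, of 2 r] \<open>0 \<le> K\<close>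
    by (simp_all add: integral_phi_moments)
  then show ?thesis by blast
qed

definition xi_moment :: "nat \<Rightarrow> real" where
  "xi_moment k = phi 0 * (\<integral>u. xi u * u^k \<partial>lborel)"

lemma A0_eq_xi_moment: "A0 = xi_moment 0"
  by (simp add: A0_def xi_moment_def phi_def)

lemma A2_eq_xi_moment: "A2 = xi_moment 2"
  by (simp add: A2_def xi_moment_def phi_def)

lemma xi_moment_pos: "even k \<Longrightarrow> 0 < xi_moment k"
  unfolding xi_moment_def
  using AE_lborel_singleton[of 0] xi_pos phi_pos[of 0]
  by (intro mult_pos_pos integral_pos_AE integrable_xi_moment)
     (auto elim!: eventually_mono simp: zero_less_power_eq)

lemma A0_pos: "0 < A0" and A2_pos: "0 < A2"
  by (simp_all add: A0_eq_xi_moment A2_eq_xi_moment xi_moment_pos)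

lemma zeta_rescaled:
  assumes "0 < r"
  shows "r^(k + 1) * zeta (int k) r = (\<integral>u. xi u * u^k * phi (u / r) \<partial>lborel)"
proof -
  have "(\<integral>u. xi u * u^k * phi (u / r) \<partial>lborel)
      = r * (\<integral>s. xi (r * s) * (r * s)^k * phi (r * s / r) \<partial>lborel)"
    using lborel_integral_real_affine[of r "\<lambda>u. xi u * u^k * phi (u / r)" 0] assms by simp
  also have "\<dots> = r * (\<integral>s. r^k * (s^k * xi (r * s) * phi s) \<partial>lborel)"
    using assms by (simp add: power_mult_distrib mult_ac)
  also have "\<dots> = r^(k + 1) * zeta (int k) r"
    by (simp add: zeta_of_nat)
  finally show ?thesis ..
qed

lemma integrable_xi_moment_phi_scaled: "integrable lborel (\<lambda>u. xi u * u^k * phi (u / r))"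
proof (rule Bochner_Integration.integrable_bound)
  show "integrable lborel (\<lambda>u. phi 0 * (xi u * \<bar>u\<bar>^k))"
    by (intro integrable_mult_right integrable_xi_abs_moment)
  show "AE u in lborel. norm (xi u * u^k * phi (u / r)) \<le> norm (phi 0 * (xi u * \<bar>u\<bar>^k))"
  proof (intro AE_I2)
    fix u :: real
    have "xi u * \<bar>u\<bar>^k * phi (u / r) \<le> xi u * \<bar>u\<bar>^k * phi 0"
      using xi_pos[of u] phi_le_phi0[of "u / r"] by (intro mult_left_mono) auto
    then show "norm (xi u * u^k * phi (u / r)) \<le> norm (phi 0 * (xi u * \<bar>u\<bar>^k))"
      using xi_pos[of u] phi_pos[of "u / r"] phi_pos[of 0] by (simp add: abs_mult power_abs mult_ac)
  qed
qed measurable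

lemma zeta_large_r_bounds:
  assumes "even k" "0 < r"
  shows "0 \<le> xi_moment k - r^(k + 1) * zeta (int k) r"
    and "xi_moment k - r^(k + 1) * zeta (int k) r \<le> xi_moment (k + 2) / (2 * r^2)"
proof -
  have uk: "0 \<le> u^k" for u :: real using assms(1) by (simp add: zero_le_even_power)
  note int = integrable_xi_moment_phi_scaled[of k r]
  have "xi_moment k - r^(k + 1) * zeta (int k) r
      = (\<integral>u. phi 0 * (xi u * u^k) \<partial>lborel) - (\<integral>u. xi u * u^k * phi (u / r) \<partial>lborel)"
    unfolding zeta_rescaled[OF assms(2)] xi_moment_def by simp
  also have "\<dots> = (\<integral>u. phi 0 * (xi u * u^k) - xi u * u^k * phi (u / r) \<partial>lborel)"
    by (rule Bochner_Integration.integral_diff[symmetric, OF integrable_mult_right[OF integrable_xi_moment] int])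
  finally have diff: "xi_moment k - r^(k + 1) * zeta (int k) r = (\<integral>u. xi u * u^k * (phi 0 - phi (u / r)) \<partial>lborel)"
    by (simp add: algebra_simps)
  show "0 \<le> xi_moment k - r^(k + 1) * zeta (int k) r"
    unfolding diff
    by (intro integral_nonneg_AE AE_I2 mult_nonneg_nonneg less_imp_le[OF xi_pos] uk phi0_minus_phi_bounds(1))
  have "(\<integral>u. xi u * u^k * (phi 0 - phi (u / r)) \<partial>lborel) \<le> (\<integral>u. phi 0 / (2 * r^2) * (xi u * u^(k + 2)) \<partial>lborel)"
  proof (rule integral_mono)
    show "integrable lborel (\<lambda>u. xi u * u^k * (phi 0 - phi (u / r)))"
      using integrable_xi_moment[of k] int by (simp add: right_diff_distrib mult_ac)
    show "integrable lborel (\<lambda>u. phi 0 / (2 * r^2) * (xi u * u^(k + 2)))"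
      by (intro integrable_mult_right integrable_xi_moment)
    fix u :: real
    have "xi u * u^k * (phi 0 - phi (u / r)) \<le> xi u * u^k * (phi 0 * (u / r)^2 / 2)"
      using xi_pos[of u] uk[of u] phi0_minus_phi_bounds(2)[of "u / r"] by (intro mult_left_mono) auto
    also have "\<dots> = phi 0 / (2 * r^2) * (xi u * u^(k + 2))"
      using assms(2) by (simp add: power_divide power_add power2_eq_square field_simps)
    finally show "xi u * u^k * (phi 0 - phi (u / r)) \<le> phi 0 / (2 * r^2) * (xi u * u^(k + 2))" .
  qed
  then show "xi_moment k - r^(k + 1) * zeta (int k) r \<le> xi_moment (k + 2) / (2 * r^2)"
    unfolding diff by (simp add: xi_moment_def)
qed

lemma zeta_0_2_le_large_r:
  assumes "0 < r"
  shows "zeta 0 r \<le> A0 / r" "zeta 2 r \<le> A2 / r^3"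
  using zeta_large_r_bounds(1)[of 0 r] zeta_large_r_bounds(1)[of 2 r] assms
  by (simp_all add: A0_eq_xi_moment A2_eq_xi_moment pos_le_divide_eq power3_eq_cube mult_ac)

definition zeta_error :: real where
  "zeta_error = max (xi_moment 2 / (2 * A0)) (xi_moment 4 / (2 * A2))"

lemma zeta_error_nonneg: "0 \<le> zeta_error"
  using xi_moment_pos[of 2] A0_pos by (simp add: zeta_error_def le_max_iff_disj)

lemma zeta_0_2_ge_large_r:
  assumes "0 < r"
  shows "(1 - zeta_error / r^2) * A0 / r \<le> zeta 0 r" "(1 - zeta_error / r^2) * A2 / r^3 \<le> zeta 2 r"
proof -
  have "(1 - zeta_error / r^2) * xi_moment k \<le> r^(k + 1) * zeta (int k) r"
    if "even k" "xi_moment (k + 2) / (2 * xi_moment k) \<le> zeta_error" for k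
  proof -
    have "xi_moment (k + 2) / (2 * r^2) \<le> zeta_error / r^2 * xi_moment k"
      using that xi_moment_pos[OF that(1)] assms by (auto simp: field_simps)
    then show ?thesis using zeta_large_r_bounds(2)[OF that(1) assms] by (simp add: algebra_simps)
  qed
  from this[of 0, unfolded add_0] this[of 2] show
    "(1 - zeta_error / r^2) * A0 / r \<le> zeta 0 r" "(1 - zeta_error / r^2) * A2 / r^3 \<le> zeta 2 r"
    using assms
    by (simp_all add: zeta_error_def A0_eq_xi_moment A2_eq_xi_moment pos_divide_le_eq mult.commute)
qed

section \<open>The integrand of alpha\<close>

definition alpha_integrand :: "nat \<Rightarrow> real \<Rightarrow> real" where
  "alpha_integrand n r = zeta 0 r powr ((real n - 1) / 2) * sqrt (zeta 2 r) * real n * r ^ (n - 1)"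

lemma alpha_eq_set_integral: "0 \<le> snr \<Longrightarrow> alpha snr n = (LBINT r:{0..sqrt snr}. alpha_integrand n r)"
  unfolding alpha_def alpha_integrand_def by (simp add: zero_ereal_def interval_integral_Icc)

lemma borel_measurable_alpha_integrand [measurable]: "alpha_integrand n \<in> borel_measurable borel"
  unfolding alpha_integrand_def by measurable

lemma alpha_integrand_nonneg: "0 \<le> r \<Longrightarrow> 0 \<le> alpha_integrand n r"
  unfolding alpha_integrand_def using zeta_0_2_pos[of r] by simp

lemma alpha_integrand_le:
  assumes "1 \<le> n" "0 \<le> r" "zeta 0 r \<le> a" "zeta 2 r \<le> b"
  shows "alpha_integrand n r \<le> a powr ((real n - 1) / 2) * sqrt b * real n * r ^ (n - 1)"
  unfolding alpha_integrand_def using assms zeta_0_2_pos[of r]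
  by (intro mult_right_mono mult_mono powr_mono2) auto

lemma alpha_integrand_ge:
  assumes "1 \<le> n" "0 \<le> r" "0 \<le> a" "a \<le> zeta 0 r" "0 \<le> b" "b \<le> zeta 2 r"
  shows "a powr ((real n - 1) / 2) * sqrt b * real n * r ^ (n - 1) \<le> alpha_integrand n r"
  unfolding alpha_integrand_def using assms zeta_0_2_pos[of r]
  by (intro mult_right_mono mult_mono powr_mono2) auto

lemma set_integrable_alpha_integrand:
  assumes "A \<in> sets borel" "A \<subseteq> {0..b}"
  shows "set_integrable lborel A (alpha_integrand n)"
proof -
  obtain K where K: "\<And>r. \<bar>zeta 0 r - 2 / pi\<bar> \<le> K * r^2 \<and> \<bar>zeta 2 r - 2 / pi\<bar> \<le> K * r^2"
    using zeta_0_2_near_0 by blast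
  define M where "M = 2 / pi + K * b^2"
  have "\<bar>alpha_integrand n r\<bar> \<le> M powr ((real n - 1) / 2) * sqrt M * real n * b ^ (n - 1)"
    if "r \<in> {0..b}" for r
  proof (cases "n = 0")
    case False
    have "K * r^2 \<le> K * b^2"
      using that K[of 1] by (intro mult_left_mono power_mono) auto
    then have zeta_le_M: "zeta 0 r \<le> M" "zeta 2 r \<le> M" using K[of r] by (auto simp: M_def abs_le_iff)
    then have "0 \<le> M" using zeta_0_2_pos[of r] by simp
    have "alpha_integrand n r \<le> M powr ((real n - 1) / 2) * sqrt M * real n * r ^ (n - 1)"
      using False that zeta_le_M by (intro alpha_integrand_le) auto
    also have "\<dots> \<le> M powr ((real n - 1) / 2) * sqrt M * real n * b ^ (n - 1)"
      using that \<open>0 \<le> M\<close> by (intro mult_left_mono power_mono) auto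
    finally show ?thesis using alpha_integrand_nonneg[of r n] that by simp
  qed (simp add: alpha_integrand_def)
  then have "set_integrable lborel {0..b} (alpha_integrand n)"
    unfolding set_integrable_def
    by (intro integrableI_bounded_set_indicator[where B="M powr ((real n - 1) / 2) * sqrt M * real n * b ^ (n - 1)"])
       (auto simp: emeasure_lborel_Icc_eq)
  then show ?thesis using assms by (auto intro: set_integrable_subset)
qed

lemma large_r_integrand_identity:
  fixes a b c r :: real
  assumes "0 < r" "0 \<le> a" "0 \<le> b" "0 \<le> c" "1 \<le> n"
  shows "(c * a / r) powr ((real n - 1) / 2) * sqrt (c * b / r^3) * real n * r^(n - 1)
    = c powr (real n / 2) * (real n * a powr ((real n - 1) / 2) * sqrt b * r powr ((real n - 4) / 2))"
proof -
  let ?p = "(real n - 1) / 2"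
  have "(real n - 1) / 2 + 3 / 2 + (real n - 4) / 2 = real n - 1"
    by (simp add: field_simps)
  then have r: "r^(n - 1) = r powr ?p * r powr (3 / 2) * r powr ((real n - 4) / 2)"
    using assms by (simp add: powr_realpow[symmetric] of_nat_diff flip: powr_add)
  have "sqrt (r^3) = r powr (3 / 2)"
    using assms powr_half_sqrt_powr[of r 3] by simp
  then have sqrt: "sqrt (c * b / r^3) = sqrt c * sqrt b / r powr (3 / 2)"
    by (simp add: real_sqrt_divide real_sqrt_mult)
  have c: "c powr ?p * sqrt c = c powr (real n / 2)"
    using assms by (simp add: powr_mult_sqrt add_divide_distrib[symmetric])
  have "(c * a / r) powr ?p = c powr ?p * a powr ?p / r powr ?p"
    using assms by (simp add: powr_divide powr_mult)
  then show ?thesis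
    unfolding sqrt r c[symmetric] using assms by (simp add: field_simps)
qed

lemma alpha_integrand_le_large_r:
  assumes "1 \<le> n" "0 < r"
  shows "alpha_integrand n r \<le> real n * A0 powr ((real n - 1) / 2) * sqrt A2 * r powr ((real n - 4) / 2)"
proof -
  have "alpha_integrand n r \<le> (1 * A0 / r) powr ((real n - 1) / 2) * sqrt (1 * A2 / r^3) * real n * r^(n - 1)"
    using alpha_integrand_le[OF assms(1) _ zeta_0_2_le_large_r[OF assms(2)]] assms by simp
  also have "\<dots> = real n * A0 powr ((real n - 1) / 2) * sqrt A2 * r powr ((real n - 4) / 2)"
    using large_r_integrand_identity[of r A0 A2 1 n] assms A0_pos A2_pos by simp
  finally show ?thesis .
qed

lemma alpha_integrand_ge_large_r:
  assumes "1 \<le> n" "0 < r" "0 \<le> c" "c \<le> 1 - zeta_error / r^2"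
  shows "c powr (real n / 2) * (real n * A0 powr ((real n - 1) / 2) * sqrt A2 * r powr ((real n - 4) / 2))
    \<le> alpha_integrand n r"
proof -
  have "c * A0 / r \<le> (1 - zeta_error / r^2) * A0 / r" "c * A2 / r^3 \<le> (1 - zeta_error / r^2) * A2 / r^3"
    using assms A0_pos A2_pos by (auto intro!: divide_right_mono mult_right_mono)
  then have "c * A0 / r \<le> zeta 0 r" "c * A2 / r^3 \<le> zeta 2 r"
    using zeta_0_2_ge_large_r[OF assms(2)] by linarith+
  have "c powr (real n / 2) * (real n * A0 powr ((real n - 1) / 2) * sqrt A2 * r powr ((real n - 4) / 2))
    = (c * A0 / r) powr ((real n - 1) / 2) * sqrt (c * A2 / r^3) * real n * r^(n - 1)"
    using assms A0_pos A2_pos by (intro large_r_integrand_identity[symmetric]) auto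
  also have "\<dots> \<le> alpha_integrand n r"
    using assms A0_pos A2_pos \<open>c * A0 / r \<le> zeta 0 r\<close> \<open>c * A2 / r^3 \<le> zeta 2 r\<close>
    by (intro alpha_integrand_ge) auto
  finally show ?thesis .
qed

(* The positivity of zeta 0 matters here: 0 powr 0 = 0. *)
lemma alpha_integrand_1: "alpha_integrand 1 = (\<lambda>r. sqrt (zeta 2 r))"
proof
  fix r
  have "zeta 0 r \<noteq> 0" using zeta_0_2_pos(1)[of r] by simp
  then show "alpha_integrand 1 r = sqrt (zeta 2 r)" by (simp add: alpha_integrand_def)
qed

lemma alpha_integrand_2_ge:
  assumes "0 < r"
  shows "2 * (A0 powr (1 / 2) * sqrt A2) * (1 / r - zeta_error / r^3) \<le> alpha_integrand 2 r"
proof (cases "zeta_error \<le> r^2")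
  case True
  let ?c = "1 - zeta_error / r^2"
  have "2 * (A0 powr (1 / 2) * sqrt A2) * (1 / r - zeta_error / r^3)
      = ?c * (2 * A0 powr (1 / 2) * sqrt A2 * (1 / r))"
    using assms by (simp add: power3_eq_cube power2_eq_square field_simps)
  also have "\<dots> = ?c powr (real 2 / 2) * (real 2 * A0 powr ((real 2 - 1) / 2) * sqrt A2 * r powr ((real 2 - 4) / 2))"
    using True assms by (simp add: powr_minus_divide)
  also have "\<dots> \<le> alpha_integrand 2 r"
    using True assms by (intro alpha_integrand_ge_large_r) (auto simp: field_simps)
  finally show ?thesis .
next
  case False
  then have "1 / r - zeta_error / r^3 < 0"
    using assms by (simp add: power3_eq_cube power2_eq_square field_simps)
  then have "2 * (A0 powr (1 / 2) * sqrt A2) * (1 / r - zeta_error / r^3) < 0"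
    using A0_pos A2_pos by (intro mult_pos_neg) auto
  then show ?thesis
    using alpha_integrand_nonneg[of r 2] assms by linarith
qed

section \<open>Small snr\<close>

lemma alpha_between_powers:
  assumes "1 \<le> n" "0 \<le> snr" "0 \<le> L"
    and zeta: "\<And>r k. r \<in> {0..sqrt snr} \<Longrightarrow> k = 0 \<or> k = 2 \<Longrightarrow> L \<le> zeta k r \<and> zeta k r \<le> U"
  shows "(L * snr) powr (real n / 2) \<le> alpha snr n" "alpha snr n \<le> (U * snr) powr (real n / 2)"
proof -
  let ?T = "sqrt snr"
  note poly = set_integral_Icc_power[OF real_sqrt_ge_zero[OF assms(2)] assms(1)]
  have int: "set_integrable lborel {0..?T} (\<lambda>r. c powr (real n / 2) * (real n * r^(n - 1)))" for c
    using poly(1) by (rule set_integrable_mult_right)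
  have "?T^n = snr powr (real n / 2)"
    using assms(1,2) by (cases "snr = 0") (simp_all add: sqrt_powr[symmetric] powr_realpow)
  then have scale: "(c * snr) powr (real n / 2) = (LBINT r:{0..?T}. c powr (real n / 2) * (real n * r^(n - 1)))"
    for c
    using poly(2) by (simp add: powr_mult)
  have "0 \<le> U" using zeta[of 0 0] assms(2,3) by auto
  have "(LBINT r:{0..?T}. L powr (real n / 2) * (real n * r^(n - 1))) \<le> (LBINT r:{0..?T}. alpha_integrand n r)"
  proof (rule set_integral_mono[OF int set_integrable_alpha_integrand])
    fix r assume r: "r \<in> {0..?T}"
    have "L powr ((real n - 1) / 2) * sqrt L * real n * r^(n - 1) \<le> alpha_integrand n r"
      using r assms zeta[of r 0] zeta[of r 2] by (intro alpha_integrand_ge) auto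
    then show "L powr (real n / 2) * (real n * r^(n - 1)) \<le> alpha_integrand n r"
      using assms(3) by (simp add: powr_mult_sqrt add_divide_distrib[symmetric] mult.assoc)
  qed auto
  then show "(L * snr) powr (real n / 2) \<le> alpha snr n"
    using assms by (simp add: scale alpha_eq_set_integral)
  have "(LBINT r:{0..?T}. alpha_integrand n r) \<le> (LBINT r:{0..?T}. U powr (real n / 2) * (real n * r^(n - 1)))"
  proof (rule set_integral_mono[OF set_integrable_alpha_integrand int])
    fix r assume r: "r \<in> {0..?T}"
    have "alpha_integrand n r \<le> U powr ((real n - 1) / 2) * sqrt U * real n * r^(n - 1)"
      using r assms zeta[of r 0] zeta[of r 2] by (intro alpha_integrand_le) auto
    then show "alpha_integrand n r \<le> U powr (real n / 2) * (real n * r^(n - 1))"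
      using \<open>0 \<le> U\<close> by (simp add: powr_mult_sqrt add_divide_distrib[symmetric] mult.assoc)
  qed auto
  then show "alpha snr n \<le> (U * snr) powr (real n / 2)"
    using assms by (simp add: scale alpha_eq_set_integral)
qed

lemma alpha_small_snr_ratio:
  assumes K: "\<And>r. \<bar>zeta 0 r - 2 / pi\<bar> \<le> K * r^2" "\<And>r. \<bar>zeta 2 r - 2 / pi\<bar> \<le> K * r^2"
    and n: "1 \<le> n" and snr: "0 < snr" and small: "pi * K * real n * snr \<le> 2"
  shows "\<bar>alpha snr n / ((2 / pi * snr) powr (real n / 2)) - 1\<bar> \<le> pi * K * real n * snr"
proof -
  define y where "y = pi * K * snr / 2"
  have "0 \<le> K" using K(1)[of 1] by simp
  then have y0: "0 \<le> y" using snr by (simp add: y_def)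
  have y1: "real n * y \<le> 1" "2 * real n * y = pi * K * real n * snr" "K * snr = 2 / pi * y"
    using small by (simp_all add: y_def field_simps)
  have y2: "y \<le> real n * y" using y0 n by (simp add: mult_le_cancel_right1)
  note y = y0 y1(1) y2 y1(3)
  have "2 / pi - K * snr \<le> zeta k r \<and> zeta k r \<le> 2 / pi + K * snr" if "r \<in> {0..sqrt snr}" "k = 0 \<or> k = 2" for r k
  proof -
    have "r^2 \<le> snr" using that(1) snr by (metis atLeastAtMost_iff power_mono real_sqrt_pow2 less_imp_le)
    then have "K * r^2 \<le> K * snr" using \<open>0 \<le> K\<close> by (intro mult_left_mono)
    then show ?thesis using that(2) K[of r] by (auto simp: abs_le_iff)
  qed
  moreover have "0 \<le> 2 / pi - K * snr" unfolding y(4) using y by (simp add: field_simps)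
  ultimately have bounds: "((2 / pi - K * snr) * snr) powr (real n / 2) \<le> alpha snr n"
      "alpha snr n \<le> ((2 / pi + K * snr) * snr) powr (real n / 2)"
    using alpha_between_powers[OF n less_imp_le[OF snr]] by blast+
  define D where "D = (2 / pi * snr) powr (real n / 2)"
  have "0 < D" using snr by (simp add: D_def)
  have "(2 / pi - K * snr) * snr = 2 / pi * snr * (1 - y)" "(2 / pi + K * snr) * snr = 2 / pi * snr * (1 + y)"
    by (simp_all add: y(4) field_simps)
  then have "D * (1 - y) powr (real n / 2) \<le> alpha snr n" "alpha snr n \<le> D * (1 + y) powr (real n / 2)"
    using bounds unfolding D_def by (simp_all only: powr_mult)
  moreover have "D * (1 - real n * y) \<le> D * (1 - y) powr (real n / 2)"
    using one_minus_powr_half_ge[of y n] y n \<open>0 < D\<close> by (intro mult_left_mono) auto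
  moreover have "D * (1 + y) powr (real n / 2) \<le> D * (1 + 2 * real n * y)"
    using one_plus_powr_half_le[OF y(1,2)] \<open>0 < D\<close> by (intro mult_left_mono) auto
  ultimately have "D * (1 - real n * y) \<le> alpha snr n" "alpha snr n \<le> D * (1 + 2 * real n * y)"
    by linarith+
  then have "1 - real n * y \<le> alpha snr n / D" "alpha snr n / D \<le> 1 + 2 * real n * y"
    using \<open>0 < D\<close> by (simp_all add: pos_le_divide_eq pos_divide_le_eq mult.commute)
  then show ?thesis
    using y0 y1(2) mult_nonneg_nonneg[OF of_nat_0_le_iff y0] unfolding D_def abs_le_iff by linarith
qed

lemma alpha_small_snr_uniform:
  "\<forall>e>0. \<exists>d>0. \<forall>nt::nat. \<forall>snr::real. nt \<ge> 1 \<and> snr > 0 \<and> real nt * snr < d \<longrightarrow>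
     \<bar>alpha snr nt / ((2 / pi * snr) powr (real nt / 2)) - 1\<bar> < e"
proof (intro allI impI)
  fix e :: real
  assume "0 < e"
  obtain K0 where K0: "\<And>r. \<bar>zeta 0 r - 2 / pi\<bar> \<le> K0 * r^2 \<and> \<bar>zeta 2 r - 2 / pi\<bar> \<le> K0 * r^2"
    using zeta_0_2_near_0 by blast
  define K where "K = max K0 1"
  have K: "\<bar>zeta 0 r - 2 / pi\<bar> \<le> K * r^2" "\<bar>zeta 2 r - 2 / pi\<bar> \<le> K * r^2" for r
    using K0[of r] mult_right_mono[of K0 K "r^2"] by (auto simp: K_def)
  have "0 < K" by (simp add: K_def)
  define d where "d = min e 2 / (pi * K)"
  have "0 < d" using \<open>0 < e\<close> \<open>0 < K\<close> by (simp add: d_def)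
  moreover have "\<bar>alpha snr n / ((2 / pi * snr) powr (real n / 2)) - 1\<bar> < e"
    if "1 \<le> n" "0 < snr" "real n * snr < d" for n snr
  proof -
    have "pi * K * real n * snr < min e 2"
      using that(3) \<open>0 < K\<close> by (simp add: d_def field_simps)
    then have "pi * K * real n * snr \<le> 2" "pi * K * real n * snr < e" by simp_all
    then show ?thesis
      using alpha_small_snr_ratio[OF K that(1,2)] by linarith
  qed
  ultimately show "\<exists>d>0. \<forall>nt::nat. \<forall>snr::real. nt \<ge> 1 \<and> snr > 0 \<and> real nt * snr < d \<longrightarrow>
     \<bar>alpha snr nt / ((2 / pi * snr) powr (real nt / 2)) - 1\<bar> < e"
    by blast
qed

section \<open>Large snr\<close>

lemma set_integrable_sqrt_zeta_2: "set_integrable lborel {0..} (\<lambda>r. sqrt (zeta 2 r))"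
proof -
  have "set_integrable lborel {0..1} (\<lambda>r. sqrt (zeta 2 r))"
    using set_integrable_alpha_integrand[of "{0..1}" 1 1] unfolding alpha_integrand_1 by simp
  moreover have "set_integrable lborel {1..} (\<lambda>r. sqrt (zeta 2 r))"
    unfolding set_integrable_def
  proof (rule Bochner_Integration.integrable_bound)
    show "integrable lborel (\<lambda>r. sqrt A2 * (indicator {1..} r *\<^sub>R r powr (- 3 / 2)))"
      using set_integrable_powr_to_inf[of "- 3 / 2" 1] unfolding set_integrable_def
      by (intro integrable_mult_right) auto
    show "AE r in lborel. norm (indicator {1..} r *\<^sub>R sqrt (zeta 2 r))
        \<le> norm (sqrt A2 * (indicator {1..} r *\<^sub>R r powr (- 3 / 2)))"
    proof (intro AE_I2)
      fix r :: real
      show "norm (indicator {1..} r *\<^sub>R sqrt (zeta 2 r)) \<le> norm (sqrt A2 * (indicator {1..} r *\<^sub>R r powr (- 3 / 2)))"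
      proof (cases "1 \<le> r")
        case True
        then have "sqrt (zeta 2 r) \<le> sqrt A2 * r powr (- 3 / 2)"
          using alpha_integrand_le_large_r[of 1 r, unfolded alpha_integrand_1] A0_pos by simp
        then show ?thesis using True zeta_0_2_pos(2)[of r] by (simp add: indicator_def)
      qed (simp add: indicator_def)
    qed
  qed measurable
  ultimately have "set_integrable lborel ({0..1} \<union> {1..}) (\<lambda>r. sqrt (zeta 2 r))"
    by (rule set_integrable_Un) auto
  moreover have "{0..1} \<union> {1..} = {0::real..}" by auto
  ultimately show ?thesis by simp
qed

lemma alpha_pos_small_snr: "\<exists>snr>0. 0 < alpha snr n" if "1 \<le> n"
proof -
  from alpha_small_snr_uniform[rule_format, of "1 / 2"] obtain d where "0 < d" and d:
    "\<forall>nt snr. 1 \<le> nt \<and> 0 < snr \<and> real nt * snr < d \<longrightarrow>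
      \<bar>alpha snr nt / ((2 / pi * snr) powr (real nt / 2)) - 1\<bar> < 1 / 2"
    by auto
  define snr where "snr = d / (2 * real n)"
  have "0 < snr" "real n * snr < d" using \<open>0 < d\<close> that by (auto simp: snr_def)
  with d[rule_format, of n snr] that have "\<bar>alpha snr n / ((2 / pi * snr) powr (real n / 2)) - 1\<bar> < 1 / 2"
    by blast
  then have "0 < alpha snr n / ((2 / pi * snr) powr (real n / 2))"
    unfolding abs_less_iff by linarith
  then have "0 < alpha snr n" using \<open>0 < snr\<close> by (simp add: zero_less_divide_iff)
  with \<open>0 < snr\<close> show ?thesis by blast
qed

lemma alpha_1_asymp_equiv: "(\<lambda>snr. alpha snr 1) \<sim>[at_top] (\<lambda>snr. LBINT r:{0..}. sqrt (zeta 2 r))"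
proof -
  let ?L = "LBINT r:{0..}. sqrt (zeta 2 r)"
  have alpha_1: "alpha snr 1 = (LBINT r:{0..sqrt snr}. sqrt (zeta 2 r))" if "0 \<le> snr" for snr
    using alpha_eq_set_integral[OF that, of 1] unfolding alpha_integrand_1 .
  have "((\<lambda>b. LBINT r:{0..b}. sqrt (zeta 2 r)) \<longlongrightarrow> ?L) at_top"
    by (rule tendsto_set_lebesgue_integral_at_top[OF _ set_integrable_sqrt_zeta_2]) auto
  then have "((\<lambda>snr. LBINT r:{0..sqrt snr}. sqrt (zeta 2 r)) \<longlongrightarrow> ?L) at_top"
    by (rule filterlim_compose[OF _ sqrt_at_top])
  moreover have "eventually (\<lambda>snr. (LBINT r:{0..sqrt snr}. sqrt (zeta 2 r)) = alpha snr 1) at_top"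
    using eventually_ge_at_top[of "0::real"] by (rule eventually_mono) (rule alpha_1[symmetric])
  ultimately have lim: "((\<lambda>snr. alpha snr 1) \<longlongrightarrow> ?L) at_top"
    by (rule Lim_transform_eventually)
  obtain snr where snr: "0 < snr" and "0 < alpha snr 1"
    using alpha_pos_small_snr[of 1] by auto
  moreover have "alpha snr 1 \<le> ?L"
    unfolding alpha_1[OF less_imp_le[OF snr]]
    by (rule set_integral_mono_subset[OF set_integrable_sqrt_zeta_2])
      (auto intro: less_imp_le[OF zeta_0_2_pos(2)])
  ultimately have "?L \<noteq> 0" by linarith
  with lim show ?thesis by (rule tendsto_imp_asymp_equiv_const)
qed

lemma alpha_2_split:
  assumes "1 \<le> snr"
  shows "alpha snr 2 = (LBINT r:{0..<1}. alpha_integrand 2 r) + (LBINT r:{1..sqrt snr}. alpha_integrand 2 r)"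
proof -
  define T where "T = sqrt snr"
  have "1 \<le> T" using assms by (simp add: T_def)
  then have "{0..T} = {0..<1} \<union> {1..T}" by auto
  then have "alpha snr 2 = (LBINT r:{0..<1} \<union> {1..T}. alpha_integrand 2 r)"
    using assms by (simp add: alpha_eq_set_integral T_def)
  also have "\<dots> = (LBINT r:{0..<1}. alpha_integrand 2 r) + (LBINT r:{1..T}. alpha_integrand 2 r)"
    using \<open>1 \<le> T\<close> by (intro set_integral_Un set_integrable_alpha_integrand[of _ T]) auto
  finally show ?thesis by (simp add: T_def)
qed

lemma alpha_2_tail_bounds:
  assumes "1 \<le> snr"
  shows "A0 powr (1 / 2) * sqrt A2 * (ln snr - zeta_error) \<le> (LBINT r:{1..sqrt snr}. alpha_integrand 2 r)"
    and "(LBINT r:{1..sqrt snr}. alpha_integrand 2 r) \<le> A0 powr (1 / 2) * sqrt A2 * ln snr"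
proof -
  let ?T = "sqrt snr" and ?K = "A0 powr (1 / 2) * sqrt A2"
  have T: "1 \<le> ?T" "2 * ln ?T = ln snr" using assms by (simp_all add: ln_sqrt)
  have "0 < ?K" using A0_pos A2_pos by simp
  have int: "set_integrable lborel {1..?T} (alpha_integrand 2)"
    by (rule set_integrable_alpha_integrand[of _ ?T]) auto
  have int_c: "set_integrable lborel {1..?T} (\<lambda>r. 2 * ?K * (1 / r - c / r^3))" for c
    using set_integral_inverse_minus_cube(1)[OF T(1)] by (rule set_integrable_mult_right)
  have integral_c: "(LBINT r:{1..?T}. 2 * ?K * (1 / r - c / r^3)) = ?K * (ln snr - c) + ?K * c / ?T^2" for c
  proof -
    have "(LBINT r:{1..?T}. 2 * ?K * (1 / r - c / r^3)) = 2 * ?K * (LBINT r:{1..?T}. 1 / r - c / r^3)"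
      by (rule set_integral_mult_right)
    also have "\<dots> = 2 * ?K * (ln ?T + c / (2 * ?T^2) - c / 2)"
      by (simp only: set_integral_inverse_minus_cube(2)[OF T(1)])
    also have "\<dots> = ?K * (ln snr - c) + ?K * c / ?T^2"
      using T by (simp add: field_simps)
    finally show ?thesis .
  qed
  have "(LBINT r:{1..?T}. 2 * ?K * (1 / r - zeta_error / r^3)) \<le> (LBINT r:{1..?T}. alpha_integrand 2 r)"
    using alpha_integrand_2_ge by (intro set_integral_mono[OF int_c int]) auto
  moreover have "0 \<le> ?K * zeta_error / ?T^2" using \<open>0 < ?K\<close> zeta_error_nonneg by simp
  ultimately show "?K * (ln snr - zeta_error) \<le> (LBINT r:{1..?T}. alpha_integrand 2 r)"
    using integral_c[of zeta_error] by linarith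
  have "(LBINT r:{1..?T}. alpha_integrand 2 r) \<le> (LBINT r:{1..?T}. 2 * ?K * (1 / r - 0 / r^3))"
    using alpha_integrand_le_large_r[of 2]
    by (intro set_integral_mono[OF int int_c]) (auto simp: powr_minus_divide mult.assoc)
  then show "(LBINT r:{1..?T}. alpha_integrand 2 r) \<le> ?K * ln snr"
    using integral_c[of 0] by simp
qed

lemma alpha_2_log_bounded: "\<exists>C. \<forall>snr\<ge>1. \<bar>alpha snr 2 - A0 powr (1 / 2) * sqrt A2 * ln snr\<bar> \<le> C"
proof -
  let ?C0 = "LBINT r:{0..<1}. alpha_integrand 2 r" and ?K = "A0 powr (1 / 2) * sqrt A2"
  have "0 \<le> ?C0" unfolding set_lebesgue_integral_def
    using alpha_integrand_nonneg by (intro integral_nonneg_AE) (auto simp: indicator_def)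
  moreover have "0 \<le> ?K * zeta_error" using zeta_error_nonneg A2_pos by simp
  ultimately have "\<bar>alpha snr 2 - ?K * ln snr\<bar> \<le> ?C0 + ?K * zeta_error" if "1 \<le> snr" for snr
    using alpha_2_split[OF that] alpha_2_tail_bounds[OF that] unfolding abs_le_iff right_diff_distrib
    by linarith
  then show ?thesis by blast
qed

lemma alpha_2_asymp_equiv: "(\<lambda>snr. alpha snr 2) \<sim>[at_top] (\<lambda>snr. A0 powr (1 / 2) * sqrt A2 * ln snr)"
proof -
  define K where "K = A0 powr (1 / 2) * sqrt A2"
  have "0 < K" using A0_pos A2_pos by (simp add: K_def)
  obtain C where C: "\<And>snr. 1 \<le> snr \<Longrightarrow> \<bar>alpha snr 2 - K * ln snr\<bar> \<le> C"
    using alpha_2_log_bounded unfolding K_def by auto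
  have "filterlim (\<lambda>snr. K * ln snr) at_top at_top"
    by (rule filterlim_tendsto_pos_mult_at_top[OF tendsto_const \<open>0 < K\<close> ln_at_top])
  then have bound_lim: "((\<lambda>snr. C / (K * ln snr)) \<longlongrightarrow> 0) at_top"
    by (intro tendsto_divide_0[OF tendsto_const] filterlim_at_top_imp_at_infinity)
  have "eventually (\<lambda>snr. norm (alpha snr 2 / (K * ln snr) - 1) \<le> C / (K * ln snr)) at_top"
    using eventually_gt_at_top[of 1]
  proof eventually_elim
    case (elim snr)
    then have "0 < K * ln snr" using \<open>0 < K\<close> by simp
    have "alpha snr 2 / (K * ln snr) - 1 = (alpha snr 2 - K * ln snr) / (K * ln snr)"
      using \<open>0 < K\<close> elim by (simp add: diff_divide_distrib)
    then have "norm (alpha snr 2 / (K * ln snr) - 1) = \<bar>alpha snr 2 - K * ln snr\<bar> / (K * ln snr)"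
      using \<open>0 < K * ln snr\<close> by (simp add: abs_divide)
    also have "\<dots> \<le> C / (K * ln snr)"
      using C[of snr] elim \<open>0 < K * ln snr\<close> by (intro divide_right_mono) auto
    finally show ?case .
  qed
  then have "((\<lambda>snr. alpha snr 2 / (K * ln snr) - 1) \<longlongrightarrow> 0) at_top"
    using bound_lim by (rule Lim_null_comparison)
  then have "((\<lambda>snr. alpha snr 2 / (K * ln snr)) \<longlongrightarrow> 1) at_top"
    by (simp add: LIM_zero_iff)
  then show ?thesis unfolding K_def by (rule asymp_equivI')
qed

lemma alpha_le_power_law:
  assumes "3 \<le> n" "0 < snr"
  shows "alpha snr n \<le> 2 * real n / (real n - 2) * A0 powr ((real n - 1) / 2) * sqrt A2 * snr powr ((real n - 2) / 4)"
proof -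
  let ?T = "sqrt snr" and ?K = "real n * A0 powr ((real n - 1) / 2) * sqrt A2"
  have "-1 < (real n - 4) / 2" "0 \<le> ?T" using assms by auto
  note powr_integral = set_integral_powr_from_0[OF this]
  have "alpha snr n \<le> (LBINT r:{0..?T}. ?K * r powr ((real n - 4) / 2))"
    unfolding alpha_eq_set_integral[OF less_imp_le[OF assms(2)]]
  proof (rule set_integral_mono[OF set_integrable_alpha_integrand set_integrable_mult_right[OF powr_integral(1)]])
    fix r assume "r \<in> {0..?T}"
    then show "alpha_integrand n r \<le> ?K * r powr ((real n - 4) / 2)"
      using alpha_integrand_le_large_r[of n r] assms by (cases "r = 0") (auto simp: alpha_integrand_def power_0_left)
  qed auto
  also have "\<dots> = ?K * (?T powr ((real n - 2) / 2) / ((real n - 2) / 2))"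
    using powr_integral(2) by (simp add: set_integral_mult_right field_simps)
  also have "\<dots> = 2 * real n / (real n - 2) * A0 powr ((real n - 1) / 2) * sqrt A2 * snr powr ((real n - 2) / 4)"
    using assms by (simp add: sqrt_powr field_simps)
  finally show ?thesis .
qed

lemma alpha_ge_power_law_tail:
  assumes "3 \<le> n" "0 < \<theta>" "\<theta> < 1" "0 < snr" "zeta_error \<le> \<theta>^2 * snr"
  shows "(1 - zeta_error / (\<theta>^2 * snr)) powr (real n / 2) * (1 - \<theta> powr ((real n - 2) / 2))
      * (2 * real n / (real n - 2) * A0 powr ((real n - 1) / 2) * sqrt A2 * snr powr ((real n - 2) / 4))
    \<le> alpha snr n"
proof -
  let ?T = "sqrt snr" and ?K = "real n * A0 powr ((real n - 1) / 2) * sqrt A2"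
  let ?c = "1 - zeta_error / (\<theta>^2 * snr)" and ?q = "(real n - 2) / 2"
  have c: "0 \<le> ?c" using assms by (simp add: field_simps)
  have "0 < \<theta> * ?T" "\<theta> * ?T \<le> ?T" "?q \<noteq> 0" using assms by auto
  note powr_integral = set_integral_powr_Icc[OF this]
  have "?c powr (real n / 2) * (?K * ((?T powr ?q - (\<theta> * ?T) powr ?q) / ?q))
      = (LBINT r:{\<theta> * ?T..?T}. ?c powr (real n / 2) * (?K * r powr (?q - 1)))"
    using powr_integral(2) by (simp add: set_integral_mult_right)
  also have "\<dots> \<le> (LBINT r:{\<theta> * ?T..?T}. alpha_integrand n r)"
  proof (rule set_integral_mono[OF set_integrable_mult_right[OF set_integrable_mult_right[OF powr_integral(1)]]
        set_integrable_alpha_integrand])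
    fix r assume r: "r \<in> {\<theta> * ?T..?T}"
    then have "0 < r" using \<open>0 < \<theta> * ?T\<close> by auto
    have "\<theta>^2 * snr \<le> r^2"
      using r \<open>0 < \<theta> * ?T\<close> assms power_mono[of "\<theta> * ?T" r 2] by (auto simp: power_mult_distrib)
    then have "zeta_error / r^2 \<le> zeta_error / (\<theta>^2 * snr)"
      using assms zeta_error_nonneg \<open>0 < r\<close> by (intro divide_left_mono) auto
    then have "?c \<le> 1 - zeta_error / r^2" by linarith
    then show "?c powr (real n / 2) * (?K * r powr (?q - 1)) \<le> alpha_integrand n r"
      using alpha_integrand_ge_large_r[of n r ?c] assms \<open>0 < r\<close> c by (simp add: field_simps)
  qed (use \<open>0 < \<theta> * ?T\<close> in auto)
  also have "\<dots> \<le> alpha snr n"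
    unfolding alpha_eq_set_integral[OF less_imp_le[OF assms(4)]]
    by (rule set_integral_mono_subset[OF set_integrable_alpha_integrand])
      (use \<open>0 < \<theta> * ?T\<close> alpha_integrand_nonneg in auto)
  finally show ?thesis
    using assms by (simp add: powr_mult sqrt_powr field_simps)
qed

lemma alpha_ge_power_law:
  assumes n: "3 \<le> n" and \<theta>: "0 < \<theta>" "\<theta> < 1" and snr: "0 < snr"
    and s: "s \<le> 1" and large: "real n * zeta_error \<le> s * \<theta>^2 * snr"
  shows "(1 - s) * (1 - sqrt \<theta>)
      * (2 * real n / (real n - 2) * A0 powr ((real n - 1) / 2) * sqrt A2 * snr powr ((real n - 2) / 4))
    \<le> alpha snr n"
proof -
  define \<delta> where "\<delta> = zeta_error / (\<theta>^2 * snr)"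
  have "0 < \<theta>^2 * snr" using \<theta> snr by simp
  then have n\<delta>: "real n * \<delta> \<le> s" "0 \<le> \<delta>"
    using large zeta_error_nonneg by (simp_all add: \<delta>_def field_simps)
  moreover have "\<delta> \<le> real n * \<delta>" using n\<delta>(2) n by (simp add: mult_le_cancel_right1)
  ultimately have "zeta_error / (\<theta>^2 * snr) \<le> 1" using s unfolding \<delta>_def by linarith
  then have "zeta_error \<le> \<theta>^2 * snr"
    using \<open>0 < \<theta>^2 * snr\<close> by (simp add: pos_divide_le_eq)
  have "\<theta> powr ((real n - 2) / 2) \<le> \<theta> powr (1 / 2)"
    using n \<theta> by (intro powr_mono') auto
  then have "1 - sqrt \<theta> \<le> 1 - \<theta> powr ((real n - 2) / 2)"
    using \<theta> by (simp add: powr_half_sqrt)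
  moreover have "1 - s \<le> (1 - \<delta>) powr (real n / 2)"
    using one_minus_powr_half_ge[of \<delta> n] n\<delta> \<open>\<delta> \<le> real n * \<delta>\<close> s n by simp
  ultimately have "(1 - s) * (1 - sqrt \<theta>) \<le> (1 - \<delta>) powr (real n / 2) * (1 - \<theta> powr ((real n - 2) / 2))"
    using s \<theta> by (intro mult_mono) (auto simp: real_sqrt_le_1_iff)
  then show ?thesis
    using alpha_ge_power_law_tail[OF n \<theta> snr \<open>zeta_error \<le> \<theta>^2 * snr\<close>] n snr A0_pos A2_pos
    unfolding \<delta>_def by (elim order_trans[rotated] mult_right_mono) simp
qed

lemma alpha_large_snr_uniform:
  "\<forall>e>0. \<exists>M. \<forall>nt::nat. \<forall>snr::real. nt \<ge> 3 \<and> snr / real nt > M \<longrightarrow>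
     \<bar>alpha snr nt / (2 * real nt / (real nt - 2) * A0 powr ((real nt - 1) / 2) * sqrt A2
        * snr powr ((real nt - 2) / 4)) - 1\<bar> < e"
proof (intro allI impI)
  fix e :: real
  assume "0 < e"
  define s where "s = min e 1 / 4"
  have "0 < s" "s < 1" "2 * s < e" using \<open>0 < e\<close> by (auto simp: s_def)
  moreover have "(1 - s) * (1 - s) = 1 - 2 * s + s * s" by algebra
  ultimately have s: "0 < s" "s < 1" "1 - e < (1 - s) * (1 - s)"
    using mult_nonneg_nonneg[of s s] by linarith+
  define M where "M = zeta_error / (s * s^4)"
  have "0 \<le> M" using s zeta_error_nonneg by (simp add: M_def)
  moreover have "\<bar>alpha snr n / (2 * real n / (real n - 2) * A0 powr ((real n - 1) / 2) * sqrt A2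
        * snr powr ((real n - 2) / 4)) - 1\<bar> < e" if n: "3 \<le> n" and large: "M < snr / real n" for n snr
  proof -
    define P where "P = 2 * real n / (real n - 2) * A0 powr ((real n - 1) / 2) * sqrt A2 * snr powr ((real n - 2) / 4)"
    have "0 < snr / real n" using large \<open>0 \<le> M\<close> by linarith
    then have "0 < snr" using n by (simp add: zero_less_divide_iff)
    then have "0 < P" using n A0_pos A2_pos by (simp add: P_def)
    have "real n * zeta_error \<le> s * (s^2)^2 * snr"
      using large n s zeta_error_nonneg by (simp add: M_def field_simps power_mult[symmetric])
    then have "(1 - s) * (1 - s) * P \<le> alpha snr n"
      using alpha_ge_power_law[OF n _ _ \<open>0 < snr\<close>, of "s^2" s] s
      by (simp add: P_def power_less_one_iff)
    then have "(1 - e) * P < alpha snr n"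
      using s(3) \<open>0 < P\<close> mult_strict_right_mono[of "1 - e" "(1 - s) * (1 - s)" P] by linarith
    moreover have "alpha snr n \<le> P"
      unfolding P_def using alpha_le_power_law[OF n \<open>0 < snr\<close>] .
    ultimately have "1 - e < alpha snr n / P" "alpha snr n / P \<le> 1"
      using \<open>0 < P\<close> by (simp_all add: pos_less_divide_eq pos_divide_le_eq)
    then show ?thesis using \<open>0 < e\<close> unfolding P_def by (simp add: abs_less_iff)
  qed
  ultimately show "\<exists>M. \<forall>nt::nat. \<forall>snr::real. nt \<ge> 3 \<and> snr / real nt > M \<longrightarrow>
     \<bar>alpha snr nt / (2 * real nt / (real nt - 2) * A0 powr ((real nt - 1) / 2) * sqrt A2
        * snr powr ((real nt - 2) / 4)) - 1\<bar> < e"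
    by blast
qed

theorem proposition2:
  shows "(\<forall>e>0. \<exists>d>0. \<forall>nt::nat. \<forall>snr::real. nt \<ge> 1 \<and> snr > 0 \<and> real nt * snr < d \<longrightarrow>
            \<bar>alpha snr nt / ((2 / pi * snr) powr (real nt / 2)) - 1\<bar> < e)
      \<and> ((\<lambda>snr. alpha snr 1) \<sim>[at_top] (\<lambda>snr. LBINT r:{0..}. sqrt (zeta 2 r)))
      \<and> ((\<lambda>snr. alpha snr 2) \<sim>[at_top] (\<lambda>snr. A0 powr (1/2) * sqrt A2 * ln snr))
      \<and> (\<forall>e>0. \<exists>M. \<forall>nt::nat. \<forall>snr::real. nt \<ge> 3 \<and> snr / real nt > M \<longrightarrow>
            \<bar>alpha snr nt / (2 * real nt / (real nt - 2) * A0 powr ((real nt - 1) / 2) * sqrt A2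
                 * snr powr ((real nt - 2) / 4)) - 1\<bar> < e)"
  using alpha_small_snr_uniform alpha_1_asymp_equiv alpha_2_asymp_equiv alpha_large_snr_uniform
  by blast

end
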